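(* Let $M$ be a mode for a program $P$ such that $P$ is safe w.r.t. $M$ and $P$ satisfies $M$. Let $\mathit{Diseqs}$ be a conjunction of disequations and $G$ a goal with $vars(\mathit{Diseqs})\cap vars(G)=\emptyset$. Then: (i) $(G,\mathit{Diseqs})\longmapsto^*_P\mathit{true}$ iff $(\mathit{Diseqs},G)\longmapsto^*_P\mathit{true}$; (ii) $\mu(P,(G,\mathit{Diseqs}))=\mu(P,(\mathit{Diseqs},G))$; (iii) $\nu(P,(G,\mathit{Diseqs}))=\nu(P,(\mathit{Diseqs},G))$.
   Context: Predicate symbols $\mathit{true}$, $=$, $\neq$ are basic, all others non-basic. Basic atoms: $\mathit{true}$, $t_1=t_2$, $t_1\neq t_2$ (disequation); non-basic atoms $p(t_1,\dots,t_m)$, $p$ non-basic. A goal is a conjunction of atoms ("," associative, neutral element $\mathit{true}$). A clause $C$ is $A\leftarrow G$ with non-basic head $hd(C)$ and body $bd(C)$; a program is a set of clauses. All mgu's are relevant and idempotent. A variable $X$ is a local variable of goal $G$ in clause $H\leftarrow G_1,G,G_2$ iff $X\in vars(G)-vars(H,G_1,G_2)$. Operational semantics: (1) $(t_1=t_2,G)\longmapsto_P G\vartheta$ if $t_1,t_2$ unify with mgu $\vartheta$; (2) $(t_1\neq t_2,G)\longmapsto_P G$ if not unifiable; (3) $(A,G)\longmapsto_P(bd(C),G)\vartheta$ if $A$ is non-basic, $C$ a renamed apart clause of $P$ and $\vartheta$ an mgu of $A$ and $hd(C)$. A derivation is $G_0\longmapsto_P\cdots\longmapsto_P G_z$, of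 length $z$; successful if $G_z=\mathit{true}$. $\longmapsto^*_P$ is the reflexive-transitive closure. For a derivation $\delta$, $\lambda(\delta)$ is the number of goals $G_i$ in $\delta$ of the form $(A,K)$ with $A$ non-basic. $\mu(P,G)$ is the minimum of $\lambda(\delta)$ over successful derivations $\delta$ of $G$ in $P$, and $\infty$ if $G$ does not succeed; $\nu(P,G)$ is the minimum length of a successful derivation of $G$ in $P$, and $\infty$ if none. Modes: a mode for non-basic $p$ of arity $h$ is $p(m_1,\dots,m_h)$, $m_i\in\{+,?\}$; $t_i$ is an input argument iff $m_i=+$; variables in input arguments are input variables; a mode for a program contains exactly one mode per non-basic predicate occurring in it. An atom satisfies $M$ iff $M$ has a mode for its predicate and its input arguments are ground. $P$ satisfies $M$ iff for every non-basic $A_0$ satisfying $M$ and every non-basic $A$ and goal $G$ with $A_0\longmapsto^*_P(A,G)$, $A$ satisfies $M$. A clause $C$ is safe w.r.t. $M$ iff each variable of each disequation $t_1\neq t_2$ in $bd(C)$ is an input variable of $hd(C)$ or a local variable of $t_1\neq t_2$ in $C$; a program is safe iff all its clauses are. *)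

theory Defs
  imports Main "HOL-Library.Extended_Nat" "HOL-Library.Infinite_Typeclass"
begin

datatype ('f, 'v) trm = Var 'v | Fn 'f "('f, 'v) trm list"

text \<open>Atoms. The basic atom true is the neutral element of conjunction; goals are
  lists of atoms (conjunction is associative), and true is represented by the empty goal.\<close>
datatype ('f, 'p, 'v) atom =
    Eq "('f, 'v) trm" "('f, 'v) trm"
  | Neq "('f, 'v) trm" "('f, 'v) trm"
  | Pred 'p "('f, 'v) trm list"

type_synonym ('f, 'p, 'v) goal = "('f, 'p, 'v) atom list"

datatype ('f, 'p, 'v) clause = Clause 'p "('f, 'v) trm list" "('f, 'p, 'v) goal"

fun hd_cl :: "('f, 'p, 'v) clause \<Rightarrow> ('f, 'p, 'v) atom" where
  "hd_cl (Clause p ts B) = Pred p ts"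

fun bd_cl :: "('f, 'p, 'v) clause \<Rightarrow> ('f, 'p, 'v) goal" where
  "bd_cl (Clause p ts B) = B"

type_synonym ('f, 'p, 'v) program = "('f, 'p, 'v) clause set"

fun nonbasic :: "('f, 'p, 'v) atom \<Rightarrow> bool" where
  "nonbasic (Pred p ts) = True"
| "nonbasic _ = False"

fun vars_trm :: "('f, 'v) trm \<Rightarrow> 'v set" where
  "vars_trm (Var x) = {x}"
| "vars_trm (Fn f ts) = (\<Union>t\<in>set ts. vars_trm t)"

fun vars_atom :: "('f, 'p, 'v) atom \<Rightarrow> 'v set" where
  "vars_atom (Eq s t) = vars_trm s \<union> vars_trm t"
| "vars_atom (Neq s t) = vars_trm s \<union> vars_trm t"
| "vars_atom (Pred p ts) = (\<Union>t\<in>set ts. vars_trm t)"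

definition vars_goal :: "('f, 'p, 'v) goal \<Rightarrow> 'v set" where
  "vars_goal G = (\<Union>A\<in>set G. vars_atom A)"

definition vars_clause :: "('f, 'p, 'v) clause \<Rightarrow> 'v set" where
  "vars_clause C = vars_atom (hd_cl C) \<union> vars_goal (bd_cl C)"

definition ground :: "('f, 'v) trm \<Rightarrow> bool" where
  "ground t \<longleftrightarrow> vars_trm t = {}"

type_synonym ('f, 'v) subst = "'v \<Rightarrow> ('f, 'v) trm"

fun subst_trm :: "('f, 'v) subst \<Rightarrow> ('f, 'v) trm \<Rightarrow> ('f, 'v) trm" where
  "subst_trm \<sigma> (Var x) = \<sigma> x"
| "subst_trm \<sigma> (Fn f ts) = Fn f (map (subst_trm \<sigma>) ts)"

fun subst_atom :: "('f, 'v) subst \<Rightarrow> ('f, 'p, 'v) atom \<Rightarrow> ('f, 'p, 'v) atom" where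
  "subst_atom \<sigma> (Eq s t) = Eq (subst_trm \<sigma> s) (subst_trm \<sigma> t)"
| "subst_atom \<sigma> (Neq s t) = Neq (subst_trm \<sigma> s) (subst_trm \<sigma> t)"
| "subst_atom \<sigma> (Pred p ts) = Pred p (map (subst_trm \<sigma>) ts)"

definition subst_goal :: "('f, 'v) subst \<Rightarrow> ('f, 'p, 'v) goal \<Rightarrow> ('f, 'p, 'v) goal" where
  "subst_goal \<sigma> G = map (subst_atom \<sigma>) G"

fun subst_clause :: "('f, 'v) subst \<Rightarrow> ('f, 'p, 'v) clause \<Rightarrow> ('f, 'p, 'v) clause" where
  "subst_clause \<sigma> (Clause p ts B) = Clause p (map (subst_trm \<sigma>) ts) (subst_goal \<sigma> B)"

definition subst_comp :: "('f, 'v) subst \<Rightarrow> ('f, 'v) subst \<Rightarrow> ('f, 'v) subst" where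
  "subst_comp \<sigma> \<tau> = (\<lambda>x. subst_trm \<tau> (\<sigma> x))"

definition subst_dom :: "('f, 'v) subst \<Rightarrow> 'v set" where
  "subst_dom \<sigma> = {x. \<sigma> x \<noteq> Var x}"

definition subst_vars :: "('f, 'v) subst \<Rightarrow> 'v set" where
  "subst_vars \<sigma> = subst_dom \<sigma> \<union> (\<Union>x\<in>subst_dom \<sigma>. vars_trm (\<sigma> x))"

definition unifier :: "('f, 'v) subst \<Rightarrow> (('f, 'v) trm \<times> ('f, 'v) trm) list \<Rightarrow> bool" where
  "unifier \<sigma> E \<longleftrightarrow> (\<forall>(s, t)\<in>set E. subst_trm \<sigma> s = subst_trm \<sigma> t)"

definition unifiable :: "(('f, 'v) trm \<times> ('f, 'v) trm) list \<Rightarrow> bool" where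
  "unifiable E \<longleftrightarrow> (\<exists>\<sigma>. unifier \<sigma> E)"

text \<open>Most general unifiers; by the standing convention all mgus are relevant and idempotent.\<close>
definition is_mgu :: "('f, 'v) subst \<Rightarrow> (('f, 'v) trm \<times> ('f, 'v) trm) list \<Rightarrow> bool" where
  "is_mgu \<sigma> E \<longleftrightarrow> unifier \<sigma> E
     \<and> (\<forall>\<tau>. unifier \<tau> E \<longrightarrow> (\<exists>\<eta>. \<tau> = subst_comp \<sigma> \<eta>))
     \<and> subst_vars \<sigma> \<subseteq> (\<Union>(s, t)\<in>set E. vars_trm s \<union> vars_trm t)
     \<and> subst_comp \<sigma> \<sigma> = \<sigma>"

fun mgu_atoms :: "('f, 'v) subst \<Rightarrow> ('f, 'p, 'v) atom \<Rightarrow> ('f, 'p, 'v) atom \<Rightarrow> bool" where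
  "mgu_atoms \<sigma> (Pred p ts) (Pred q us) \<longleftrightarrow>
     p = q \<and> length ts = length us \<and> is_mgu \<sigma> (zip ts us)"
| "mgu_atoms \<sigma> _ _ \<longleftrightarrow> False"

definition variant :: "('f, 'p, 'v) clause \<Rightarrow> ('f, 'p, 'v) clause \<Rightarrow> bool" where
  "variant C' C \<longleftrightarrow> (\<exists>\<rho>. bij \<rho> \<and> C' = subst_clause (\<lambda>x. Var (\<rho> x)) C)"

inductive step :: "('f, 'p, 'v) program \<Rightarrow> ('f, 'p, 'v) goal \<Rightarrow> ('f, 'p, 'v) goal \<Rightarrow> bool"
  for P where
  eq: "is_mgu \<theta> [(t1, t2)] \<Longrightarrow> step P (Eq t1 t2 # G) (subst_goal \<theta> G)"
| neq: "\<not> unifiable [(t1, t2)] \<Longrightarrow> step P (Neq t1 t2 # G) G"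
| res: "nonbasic A \<Longrightarrow> C \<in> P \<Longrightarrow> variant C' C
        \<Longrightarrow> vars_clause C' \<inter> vars_goal (A # G) = {}
        \<Longrightarrow> mgu_atoms \<theta> A (hd_cl C')
        \<Longrightarrow> step P (A # G) (subst_goal \<theta> (bd_cl C' @ G))"

abbreviation steps :: "('f, 'p, 'v) program \<Rightarrow> ('f, 'p, 'v) goal \<Rightarrow> ('f, 'p, 'v) goal \<Rightarrow> bool" where
  "steps P \<equiv> (step P)\<^sup>*\<^sup>*"

text \<open>A derivation G_0 \<longmapsto> ... \<longmapsto> G_z is the nonempty list [G_0, ..., G_z]; its length is z.\<close>
definition derivation :: "('f, 'p, 'v) program \<Rightarrow> ('f, 'p, 'v) goal list \<Rightarrow> bool" where
  "derivation P ds \<longleftrightarrow> ds \<noteq> [] \<and> (\<forall>i. Suc i < length ds \<longrightarrow> step P (ds ! i) (ds ! Suc i))"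

definition successful_derivation ::
  "('f, 'p, 'v) program \<Rightarrow> ('f, 'p, 'v) goal \<Rightarrow> ('f, 'p, 'v) goal list \<Rightarrow> bool" where
  "successful_derivation P G ds \<longleftrightarrow> derivation P ds \<and> hd ds = G \<and> last ds = []"

definition deriv_length :: "('f, 'p, 'v) goal list \<Rightarrow> nat" where
  "deriv_length ds = length ds - 1"

definition lambda_d :: "('f, 'p, 'v) goal list \<Rightarrow> nat" where
  "lambda_d ds = length (filter (\<lambda>g. g \<noteq> [] \<and> nonbasic (hd g)) ds)"

definition mu :: "('f, 'p, 'v) program \<Rightarrow> ('f, 'p, 'v) goal \<Rightarrow> enat" where
  "mu P G = (INF ds \<in> {ds. successful_derivation P G ds}. enat (lambda_d ds))"

definition nu :: "('f, 'p, 'v) program \<Rightarrow> ('f, 'p, 'v) goal \<Rightarrow> enat" where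
  "nu P G = (INF ds \<in> {ds. successful_derivation P G ds}. enat (deriv_length ds))"

text \<open>A mode assignment: for each predicate at most one mode, a list of flags (True = +).\<close>
type_synonym 'p modes = "'p \<Rightarrow> bool list option"

definition preds_goal :: "('f, 'p, 'v) goal \<Rightarrow> ('p \<times> nat) set" where
  "preds_goal G = {(p, length ts) | p ts. Pred p ts \<in> set G}"

definition preds_prog :: "('f, 'p, 'v) program \<Rightarrow> ('p \<times> nat) set" where
  "preds_prog P = (\<Union>C\<in>P. preds_goal (hd_cl C # bd_cl C))"

definition mode_for :: "'p modes \<Rightarrow> ('f, 'p, 'v) program \<Rightarrow> bool" where
  "mode_for M P \<longleftrightarrow> dom M = fst ` preds_prog P
     \<and> (\<forall>(p, n)\<in>preds_prog P. \<exists>m. M p = Some m \<and> length m = n)"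

fun sat_mode :: "'p modes \<Rightarrow> ('f, 'p, 'v) atom \<Rightarrow> bool" where
  "sat_mode M (Pred p ts) \<longleftrightarrow> (\<exists>m. M p = Some m \<and> length m = length ts
       \<and> (\<forall>i < length ts. m ! i \<longrightarrow> ground (ts ! i)))"
| "sat_mode M _ \<longleftrightarrow> False"

definition prog_satisfies :: "('f, 'p, 'v) program \<Rightarrow> 'p modes \<Rightarrow> bool" where
  "prog_satisfies P M \<longleftrightarrow> (\<forall>A0 A G. nonbasic A0 \<and> sat_mode M A0 \<and> steps P [A0] (A # G)
       \<and> nonbasic A \<longrightarrow> sat_mode M A)"

fun input_vars :: "'p modes \<Rightarrow> ('f, 'p, 'v) atom \<Rightarrow> 'v set" where
  "input_vars M (Pred p ts) = (case M p of None \<Rightarrow> {}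
      | Some m \<Rightarrow> (\<Union>i\<in>{i. i < length ts \<and> i < length m \<and> m ! i}. vars_trm (ts ! i)))"
| "input_vars M _ = {}"

definition safe_clause :: "'p modes \<Rightarrow> ('f, 'p, 'v) clause \<Rightarrow> bool" where
  "safe_clause M C \<longleftrightarrow> (\<forall>k t1 t2. k < length (bd_cl C) \<and> bd_cl C ! k = Neq t1 t2 \<longrightarrow>
     (\<forall>x\<in>vars_trm t1 \<union> vars_trm t2.
        x \<in> input_vars M (hd_cl C)
        \<or> x \<notin> vars_atom (hd_cl C) \<union> vars_goal (take k (bd_cl C)) \<union> vars_goal (drop (Suc k) (bd_cl C))))"

definition safe_prog :: "'p modes \<Rightarrow> ('f, 'p, 'v) program \<Rightarrow> bool" where
  "safe_prog M P \<longleftrightarrow> (\<forall>C\<in>P. safe_clause M C)"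

definition is_diseq :: "('f, 'p, 'v) atom \<Rightarrow> bool" where
  "is_diseq A \<longleftrightarrow> (\<exists>s t. A = Neq s t)"

end

theory Submission
  imports Defs
begin

(* Since mgus are relevant and clause variants are renamed apart, a step selecting an atom of G
   instantiates only variables of G and of the clause variant; as Diseqs shares no variable with G,
   it is never touched while G is being resolved.  A disequation step instantiates nothing and
   succeeds or fails independently of the rest of the goal.  So a successful derivation of
   (G, Diseqs) is one of G (with clause variants renamed away from Diseqs) followed by one step per
   disequation, each on a non-unifiable pair, and a successful derivation of (Diseqs, G) consists
   of the same steps in the opposite order; both have the same length and the same number of goals
   with a non-basic leftmost atom. *)

lemma subst_trm_comp: "subst_trm \<sigma> (subst_trm \<tau> t) = subst_trm (subst_comp \<tau> \<sigma>) t"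
  by (induction t) (auto simp: subst_comp_def)

lemma subst_atom_comp: "subst_atom \<sigma> (subst_atom \<tau> A) = subst_atom (subst_comp \<tau> \<sigma>) A"
  by (cases A) (auto simp: subst_trm_comp)

lemma subst_goal_comp: "subst_goal \<sigma> (subst_goal \<tau> G) = subst_goal (subst_comp \<tau> \<sigma>) G"
  by (auto simp: subst_goal_def subst_atom_comp)

lemma subst_clause_comp: "subst_clause \<sigma> (subst_clause \<tau> C) = subst_clause (subst_comp \<tau> \<sigma>) C"
  by (cases C) (auto simp: subst_trm_comp subst_goal_comp)

lemma subst_goal_Nil [simp]: "subst_goal \<sigma> [] = []"
  by (simp add: subst_goal_def)

lemma subst_goal_Cons [simp]: "subst_goal \<sigma> (A # G) = subst_atom \<sigma> A # subst_goal \<sigma> G"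
  by (simp add: subst_goal_def)

lemma subst_goal_append [simp]: "subst_goal \<sigma> (G @ H) = subst_goal \<sigma> G @ subst_goal \<sigma> H"
  by (simp add: subst_goal_def)

lemma vars_goal_Nil [simp]: "vars_goal [] = {}"
  by (simp add: vars_goal_def)

lemma vars_goal_Cons [simp]: "vars_goal (A # G) = vars_atom A \<union> vars_goal G"
  by (simp add: vars_goal_def)

lemma vars_goal_append [simp]: "vars_goal (G @ H) = vars_goal G \<union> vars_goal H"
  by (simp add: vars_goal_def)

lemma finite_vars_trm [simp]: "finite (vars_trm t)"
  by (induction t) auto

lemma finite_vars_atom [simp]: "finite (vars_atom A)"
  by (cases A) auto

lemma finite_vars_goal [simp]: "finite (vars_goal G)"
  by (induction G) auto

lemma finite_vars_clause [simp]: "finite (vars_clause C)"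
  by (simp add: vars_clause_def)

lemma hd_cl_subst_clause [simp]: "hd_cl (subst_clause \<sigma> C) = subst_atom \<sigma> (hd_cl C)"
  by (cases C) auto

lemma bd_cl_subst_clause [simp]: "bd_cl (subst_clause \<sigma> C) = subst_goal \<sigma> (bd_cl C)"
  by (cases C) auto

lemma nonbasic_subst_atom [simp]: "nonbasic (subst_atom \<sigma> A) = nonbasic A"
  by (cases A) auto

lemma subst_trm_ident: "\<forall>x\<in>vars_trm t. \<sigma> x = Var x \<Longrightarrow> subst_trm \<sigma> t = t"
  by (induction t) (auto intro: map_idI)

lemma subst_atom_ident: "\<forall>x\<in>vars_atom A. \<sigma> x = Var x \<Longrightarrow> subst_atom \<sigma> A = A"
  by (cases A) (auto simp: subst_trm_ident intro: map_idI)

lemma subst_goal_ident: "\<forall>x\<in>vars_goal G. \<sigma> x = Var x \<Longrightarrow> subst_goal \<sigma> G = G"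
  by (auto simp: subst_goal_def vars_goal_def subst_atom_ident intro: map_idI)

lemma subst_goal_ident_disjoint: "subst_vars \<sigma> \<inter> vars_goal G = {} \<Longrightarrow> subst_goal \<sigma> G = G"
  by (rule subst_goal_ident) (auto simp: subst_vars_def subst_dom_def)

lemma subst_trm_Var [simp]: "subst_trm Var t = t"
  by (simp add: subst_trm_ident)

lemma subst_goal_Var [simp]: "subst_goal Var G = G"
  by (simp add: subst_goal_ident)

lemma vars_subst_trm: "vars_trm (subst_trm \<sigma> t) = (\<Union>x\<in>vars_trm t. vars_trm (\<sigma> x))"
  by (induction t) auto

lemma vars_subst_atom: "vars_atom (subst_atom \<sigma> A) = (\<Union>x\<in>vars_atom A. vars_trm (\<sigma> x))"
  by (cases A) (auto simp: vars_subst_trm)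

lemma vars_subst_goal: "vars_goal (subst_goal \<sigma> G) = (\<Union>x\<in>vars_goal G. vars_trm (\<sigma> x))"
  by (induction G) (auto simp: vars_subst_atom)

lemma vars_subst_goal_subset: "vars_goal (subst_goal \<sigma> G) \<subseteq> vars_goal G \<union> subst_vars \<sigma>"
proof -
  have "vars_trm (\<sigma> x) \<subseteq> {x} \<union> subst_vars \<sigma>" for x
    by (cases "x \<in> subst_dom \<sigma>") (auto simp: subst_vars_def subst_dom_def)
  then show ?thesis
    by (fastforce simp: vars_subst_goal)
qed

lemma subst_vars_is_mgu: "is_mgu \<theta> [(s, t)] \<Longrightarrow> subst_vars \<theta> \<subseteq> vars_trm s \<union> vars_trm t"
  by (auto simp: is_mgu_def)

lemma subst_vars_mgu_atoms: "mgu_atoms \<theta> A B \<Longrightarrow> subst_vars \<theta> \<subseteq> vars_atom A \<union> vars_atom B"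
  by (cases "(\<theta>, A, B)" rule: mgu_atoms.cases)
    (force simp: is_mgu_def dest: set_zip_leftD set_zip_rightD)+

section \<open>Renaming by involutions\<close>

abbreviation involution :: "('v \<Rightarrow> 'v) \<Rightarrow> bool" where
  "involution \<pi> \<equiv> \<forall>x. \<pi> (\<pi> x) = x"

definition renaming :: "('v \<Rightarrow> 'v) \<Rightarrow> ('f, 'v) subst" where
  "renaming \<pi> = (\<lambda>x. Var (\<pi> x))"

(* For an involution, conj_subst \<pi> \<theta> is the conjugate of \<theta> by renaming \<pi>: it does to renamed
   terms what \<theta> does to the original ones. *)
definition conj_subst :: "('v \<Rightarrow> 'v) \<Rightarrow> ('f, 'v) subst \<Rightarrow> ('f, 'v) subst" where
  "conj_subst \<pi> \<theta> = (\<lambda>x. subst_trm (renaming \<pi>) (\<theta> (\<pi> x)))"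

lemma renaming_id [simp]: "renaming (\<lambda>x. x) = Var"
  by (simp add: renaming_def)

lemma subst_comp_renaming_involution:
  "involution \<pi> \<Longrightarrow> subst_comp (renaming \<pi>) (renaming \<pi>) = Var"
  by (auto simp: subst_comp_def renaming_def)

lemma subst_trm_renaming_involution [simp]:
  "involution \<pi> \<Longrightarrow> subst_trm (renaming \<pi>) (subst_trm (renaming \<pi>) t) = t"
  by (simp add: subst_trm_comp subst_comp_renaming_involution)

lemma vars_renaming_trm: "vars_trm (subst_trm (renaming \<pi>) t) = \<pi> ` vars_trm t"
  by (auto simp: vars_subst_trm renaming_def)

lemma vars_renaming_atom: "vars_atom (subst_atom (renaming \<pi>) A) = \<pi> ` vars_atom A"
  by (auto simp: vars_subst_atom renaming_def)

lemma vars_renaming_goal: "vars_goal (subst_goal (renaming \<pi>) G) = \<pi> ` vars_goal G"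
  by (auto simp: vars_subst_goal renaming_def)

lemma vars_renaming_clause: "vars_clause (subst_clause (renaming \<pi>) C) = \<pi> ` vars_clause C"
  by (auto simp: vars_clause_def vars_renaming_atom vars_renaming_goal)

lemma subst_comp_renaming_conj_subst:
  "involution \<pi> \<Longrightarrow> subst_comp (renaming \<pi>) (conj_subst \<pi> \<theta>) = subst_comp \<theta> (renaming \<pi>)"
  by (auto simp: subst_comp_def renaming_def conj_subst_def)

lemma subst_trm_conj_subst:
  "involution \<pi> \<Longrightarrow>
    subst_trm (conj_subst \<pi> \<theta>) (subst_trm (renaming \<pi>) t) = subst_trm (renaming \<pi>) (subst_trm \<theta> t)"
  by (simp add: subst_trm_comp subst_comp_renaming_conj_subst)

lemma subst_goal_conj_subst:
  "involution \<pi> \<Longrightarrow>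
    subst_goal (conj_subst \<pi> \<theta>) (subst_goal (renaming \<pi>) G) = subst_goal (renaming \<pi>) (subst_goal \<theta> G)"
  by (simp add: subst_goal_comp subst_comp_renaming_conj_subst)

lemma mem_image_involution: "involution \<pi> \<Longrightarrow> x \<in> \<pi> ` A \<longleftrightarrow> \<pi> x \<in> A"
  by (metis image_iff)

lemma subst_vars_conj_subst:
  assumes \<pi>: "involution \<pi>"
  shows "subst_vars (conj_subst \<pi> \<theta>) = \<pi> ` subst_vars \<theta>"
proof -
  have "conj_subst \<pi> \<theta> x = Var x \<longleftrightarrow> \<theta> (\<pi> x) = Var (\<pi> x)" for x
    using subst_trm_renaming_involution[OF \<pi>, of "\<theta> (\<pi> x)"] \<pi>
    by (auto simp: conj_subst_def renaming_def)
  then have dom: "subst_dom (conj_subst \<pi> \<theta>) = \<pi> ` subst_dom \<theta>"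
    using \<pi> by (auto simp: subst_dom_def mem_image_involution)
  have "(\<Union>x\<in>\<pi> ` subst_dom \<theta>. vars_trm (conj_subst \<pi> \<theta> x))
      = (\<Union>y\<in>subst_dom \<theta>. \<pi> ` vars_trm (\<theta> y))"
    using \<pi> by (simp add: conj_subst_def vars_renaming_trm)
  then show ?thesis
    by (simp add: subst_vars_def dom image_Un image_UN)
qed

lemma unifier_renaming:
  "unifier \<tau> (map (\<lambda>(s, t). (subst_trm (renaming \<pi>) s, subst_trm (renaming \<pi>) t)) E)
     \<longleftrightarrow> unifier (subst_comp (renaming \<pi>) \<tau>) E"
  by (auto simp: unifier_def subst_trm_comp)

lemma unifiable_renaming:
  assumes "involution \<pi>"
  shows "unifiable [(subst_trm (renaming \<pi>) s, subst_trm (renaming \<pi>) t)] \<longleftrightarrow> unifiable [(s, t)]"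
proof -
  have "unifier (subst_comp (renaming \<pi>) (subst_comp (renaming \<pi>) \<tau>)) E = unifier \<tau> E" for \<tau> E
    using assms by (simp add: unifier_def subst_trm_comp[symmetric])
  then show ?thesis
    using unifier_renaming[of _ \<pi> "[(s, t)]"] unfolding unifiable_def by auto
qed

lemma is_mgu_conj_subst:
  assumes \<pi>: "involution \<pi>" and mgu: "is_mgu \<theta> E"
  shows "is_mgu (conj_subst \<pi> \<theta>)
    (map (\<lambda>(s, t). (subst_trm (renaming \<pi>) s, subst_trm (renaming \<pi>) t)) E)"
    (is "is_mgu ?\<theta> ?E")
proof -
  have unif: "unifier ?\<theta> ?E"
    using mgu \<pi> by (simp add: unifier_renaming subst_comp_renaming_conj_subst)
      (auto simp: unifier_def is_mgu_def subst_trm_comp[symmetric])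
  have most_general: "\<exists>\<eta>. \<tau> = subst_comp ?\<theta> \<eta>" if "unifier \<tau> ?E" for \<tau>
  proof -
    from that mgu obtain \<eta> where \<eta>: "subst_comp (renaming \<pi>) \<tau> = subst_comp \<theta> \<eta>"
      by (auto simp: unifier_renaming is_mgu_def)
    have "\<tau> x = subst_comp ?\<theta> (subst_comp (renaming \<pi>) \<eta>) x" for x
      using fun_cong[OF \<eta>, of "\<pi> x"] \<pi>
      by (simp add: subst_comp_def conj_subst_def subst_trm_comp renaming_def)
    then show ?thesis by blast
  qed
  have "subst_vars \<theta> \<subseteq> (\<Union>(s, t)\<in>set E. vars_trm s \<union> vars_trm t)"
    using mgu by (simp add: is_mgu_def)
  then have relevant: "subst_vars ?\<theta> \<subseteq> (\<Union>(s, t)\<in>set ?E. vars_trm s \<union> vars_trm t)"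
    using \<pi> by (force simp: subst_vars_conj_subst vars_renaming_trm)
  have "subst_comp ?\<theta> ?\<theta> x = ?\<theta> x" for x
  proof -
    have "subst_comp ?\<theta> ?\<theta> x = subst_trm ?\<theta> (subst_trm (renaming \<pi>) (\<theta> (\<pi> x)))"
      by (simp add: subst_comp_def conj_subst_def)
    also have "\<dots> = subst_trm (renaming \<pi>) (subst_comp \<theta> \<theta> (\<pi> x))"
      by (simp add: subst_trm_conj_subst[OF \<pi>] subst_comp_def)
    also have "\<dots> = ?\<theta> x"
      using mgu by (simp add: is_mgu_def conj_subst_def)
    finally show ?thesis .
  qed
  then have idem: "subst_comp ?\<theta> ?\<theta> = ?\<theta>" ..
  show ?thesis
    using unif most_general relevant idem by (simp add: is_mgu_def)
qed

lemma mgu_atoms_conj_subst: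
  "involution \<pi> \<Longrightarrow> mgu_atoms \<theta> A B \<Longrightarrow>
    mgu_atoms (conj_subst \<pi> \<theta>) (subst_atom (renaming \<pi>) A) (subst_atom (renaming \<pi>) B)"
  by (cases "(\<theta>, A, B)" rule: mgu_atoms.cases) (auto simp: zip_map_map dest: is_mgu_conj_subst)

lemma variant_renaming:
  assumes "involution \<pi>" and "variant C' C"
  shows "variant (subst_clause (renaming \<pi>) C') C"
proof -
  obtain \<rho> where "bij \<rho>" and C': "C' = subst_clause (\<lambda>x. Var (\<rho> x)) C"
    using assms(2) by (auto simp: variant_def)
  moreover have "bij \<pi>"
    using assms(1) by (metis bijI')
  ultimately have "bij (\<pi> \<circ> \<rho>)"
    by (simp add: bij_comp)
  moreover have "subst_clause (renaming \<pi>) C' = subst_clause (\<lambda>x. Var ((\<pi> \<circ> \<rho>) x)) C"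
    using C' by (simp add: subst_clause_comp subst_comp_def renaming_def)
  ultimately show ?thesis
    by (auto simp: variant_def)
qed

lemma renaming_apart_involution:
  fixes X W :: "'v::infinite set"
  assumes "finite X" and "finite W"
  obtains \<pi> where "involution \<pi>" and "\<pi> ` X \<inter> W = {}" and "\<And>x. x \<in> W - X \<Longrightarrow> \<pi> x = x"
proof -
  have "infinite (- (X \<union> W))"
    using assms by (simp add: Compl_eq_Diff_UNIV infinite_UNIV)
  then obtain Y where Y: "Y \<subseteq> - (X \<union> W)" "finite Y" "card Y = card X"
    using infinite_arbitrarily_large by blast
  then obtain f where f: "bij_betw f X Y"
    using finite_same_card_bij assms(1) by metis
  define \<pi> where "\<pi> x = (if x \<in> X then f x else if x \<in> Y then inv_into X f x else x)" for x
  have "X \<inter> Y = {}"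
    using Y by blast
  then have "involution \<pi>"
    using bij_betw_apply[OF f] bij_betw_apply[OF bij_betw_inv_into[OF f]]
      bij_betw_inv_into_left[OF f] bij_betw_inv_into_right[OF f]
    by (auto simp: \<pi>_def)
  moreover have "\<pi> ` X \<inter> W = {}"
    using f Y by (auto simp: \<pi>_def bij_betw_def)
  moreover have "\<pi> x = x" if "x \<in> W - X" for x
    using that Y by (auto simp: \<pi>_def)
  ultimately show ?thesis
    using that by blast
qed

section \<open>Steps whose clause variant avoids a given set of variables\<close>

inductive step_avoiding ::
  "('f, 'p, 'v) program \<Rightarrow> 'v set \<Rightarrow> ('f, 'p, 'v) goal \<Rightarrow> ('f, 'p, 'v) goal \<Rightarrow> bool"
  for P V where
  eq: "is_mgu \<theta> [(t1, t2)] \<Longrightarrow> step_avoiding P V (Eq t1 t2 # G) (subst_goal \<theta> G)"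
| neq: "\<not> unifiable [(t1, t2)] \<Longrightarrow> step_avoiding P V (Neq t1 t2 # G) G"
| res: "nonbasic A \<Longrightarrow> C \<in> P \<Longrightarrow> variant C' C
        \<Longrightarrow> vars_clause C' \<inter> (vars_goal (A # G) \<union> V) = {}
        \<Longrightarrow> mgu_atoms \<theta> A (hd_cl C')
        \<Longrightarrow> step_avoiding P V (A # G) (subst_goal \<theta> (bd_cl C' @ G))"

lemma step_avoiding_imp_step: "step_avoiding P V G G' \<Longrightarrow> step P G G'"
proof (induction rule: step_avoiding.induct)
  case (res A C C' G \<theta>)
  then show ?case
    by (intro step.res) auto
qed (auto intro: step.intros)

lemma step_avoiding_empty_iff: "step_avoiding P {} G G' \<longleftrightarrow> step P G G'"
proof
  show "step_avoiding P {} G G' \<Longrightarrow> step P G G'"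
    by (rule step_avoiding_imp_step)
  show "step P G G' \<Longrightarrow> step_avoiding P {} G G'"
  proof (induction rule: step.induct)
    case (res A C C' G \<theta>)
    then show ?case
      by (intro step_avoiding.res) auto
  qed (auto intro: step_avoiding.intros)
qed

lemma step_avoiding_renaming:
  assumes "step_avoiding P V G G'" and \<pi>: "involution \<pi>"
  shows "step_avoiding P (\<pi> ` V) (subst_goal (renaming \<pi>) G) (subst_goal (renaming \<pi>) G')"
  using assms(1)
proof cases
  case (eq \<theta> t1 t2 G0)
  then show ?thesis
    using step_avoiding.eq[OF is_mgu_conj_subst[OF \<pi> eq(3), simplified],
        of P "\<pi> ` V" "subst_goal (renaming \<pi>) G0"]
    by (simp add: subst_goal_conj_subst[OF \<pi>])
next
  case (neq t1 t2)
  then show ?thesis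
    using step_avoiding.neq[of "subst_trm (renaming \<pi>) t1" "subst_trm (renaming \<pi>) t2" P "\<pi> ` V"]
    by (simp add: unifiable_renaming[OF \<pi>])
next
  case (res A C C' G0 \<theta>)
  have "inj \<pi>"
    using \<pi> by (metis injI)
  then have "vars_clause (subst_clause (renaming \<pi>) C')
      \<inter> (vars_goal (subst_atom (renaming \<pi>) A # subst_goal (renaming \<pi>) G0) \<union> \<pi> ` V) = {}"
    using res(6) by (simp add: vars_renaming_clause vars_renaming_atom vars_renaming_goal
        image_Un[symmetric] image_Int[symmetric])
  moreover have
    "mgu_atoms (conj_subst \<pi> \<theta>) (subst_atom (renaming \<pi>) A) (hd_cl (subst_clause (renaming \<pi>) C'))"
    using mgu_atoms_conj_subst[OF \<pi> res(7)] by simp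
  ultimately have "step_avoiding P (\<pi> ` V)
      (subst_atom (renaming \<pi>) A # subst_goal (renaming \<pi>) G0)
      (subst_goal (conj_subst \<pi> \<theta>)
        (bd_cl (subst_clause (renaming \<pi>) C') @ subst_goal (renaming \<pi>) G0))"
    using res(3,4) variant_renaming[OF \<pi> res(5)] by (intro step_avoiding.res) simp_all
  then show ?thesis
    using res(1,2) by (simp add: subst_goal_conj_subst[OF \<pi>])
qed

lemma step_renaming:
  "step P G G' \<Longrightarrow> involution \<pi> \<Longrightarrow> step P (subst_goal (renaming \<pi>) G) (subst_goal (renaming \<pi>) G')"
  using step_avoiding_renaming[of P "{}"] by (simp add: step_avoiding_empty_iff)

(* The only use of the infinitude of variables: the clause variant is moved away from V by an
   involution that fixes G. *)
lemma step_imp_step_avoiding_renamed: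
  fixes G :: "('f, 'p, 'v::infinite) goal"
  assumes "step P G G'" and "finite V"
  obtains \<pi> where "involution \<pi>" and "step_avoiding P V G (subst_goal (renaming \<pi>) G')"
  using assms(1)
proof cases
  case (res A C C' G0 \<theta>)
  obtain \<pi> where \<pi>: "involution \<pi>" and apart: "\<pi> ` vars_clause C' \<inter> (vars_goal G \<union> V) = {}"
    and id_outside: "\<And>x. x \<in> (vars_goal G \<union> V) - vars_clause C' \<Longrightarrow> \<pi> x = x"
    using renaming_apart_involution[of "vars_clause C'" "vars_goal G \<union> V"] assms(2) by auto
  have "vars_clause C' \<inter> (vars_goal G \<union> \<pi> ` V) = {}"
    using res(1,6) apart \<pi> by (auto simp: mem_image_involution)
  then have "step_avoiding P (\<pi> ` V) G G'"
    unfolding res(1,2) using res(3-7) by (intro step_avoiding.res) auto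
  from step_avoiding_renaming[OF this \<pi>]
  have "step_avoiding P V (subst_goal (renaming \<pi>) G) (subst_goal (renaming \<pi>) G')"
    using \<pi> by (simp add: image_comp comp_def)
  moreover have "subst_goal (renaming \<pi>) G = G"
    using id_outside res(1,6) by (intro subst_goal_ident) (auto simp: renaming_def)
  ultimately show ?thesis
    using that \<pi> by simp
qed (use that[of "\<lambda>x. x"] in \<open>auto intro: step_avoiding.intros\<close>)

lemma vars_step_avoiding: "step_avoiding P V G G' \<Longrightarrow> vars_goal G' \<inter> V \<subseteq> vars_goal G"
proof (induction rule: step_avoiding.induct)
  case (eq \<theta> t1 t2 G)
  then show ?case
    using vars_subst_goal_subset[of \<theta> G] subst_vars_is_mgu[OF eq] by auto
next
  case (res A C C' G \<theta>)
  have "vars_goal (subst_goal \<theta> (bd_cl C' @ G)) \<subseteq> vars_goal (A # G) \<union> vars_clause C'"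
    using vars_subst_goal_subset[of \<theta> "bd_cl C' @ G"] subst_vars_mgu_atoms[OF res(5)]
    by (auto simp: vars_clause_def)
  then show ?case
    using res(4) by blast
qed auto

lemma step_avoiding_append:
  assumes "step_avoiding P (vars_goal D) G G'" and "vars_goal G \<inter> vars_goal D = {}"
  shows "step P (G @ D) (G' @ D)"
  using assms
proof cases
  case (eq \<theta> t1 t2 G0)
  have "subst_goal \<theta> D = D"
    using subst_vars_is_mgu[OF eq(3)] assms(2) eq(1) by (intro subst_goal_ident_disjoint) auto
  then show ?thesis
    using step.eq[OF eq(3), of P "G0 @ D"] eq(1,2) by simp
next
  case (neq t1 t2)
  then show ?thesis
    using step.neq[of t1 t2 P "G' @ D"] by simp
next
  case (res A C C' G0 \<theta>)
  have "subst_goal \<theta> D = D"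
    using subst_vars_mgu_atoms[OF res(7)] assms(2) res(1,6)
    by (intro subst_goal_ident_disjoint) (auto simp: vars_clause_def)
  moreover have "step P (A # G0 @ D) (subst_goal \<theta> (bd_cl C' @ G0 @ D))"
    using res(3-7) by (intro step.res) auto
  ultimately show ?thesis
    using res(1,2) by simp
qed

lemma step_appendE:
  assumes "step P (G @ D) Y" and "G \<noteq> []" and "vars_goal G \<inter> vars_goal D = {}"
  obtains G' where "Y = G' @ D" and "step_avoiding P (vars_goal D) G G'"
proof -
  obtain A G0 where G: "G = A # G0"
    using assms(2) by (cases G) auto
  have "step P (A # G0 @ D) Y"
    using assms(1) by (simp add: G)
  then show ?thesis
  proof cases
    case (eq \<theta> t1 t2)
    have "subst_goal \<theta> D = D"
      using subst_vars_is_mgu[OF eq(3)] assms(3) eq(1) G by (intro subst_goal_ident_disjoint) auto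
    then show ?thesis
      using that[of "subst_goal \<theta> G0"] step_avoiding.eq[OF eq(3), of P "vars_goal D" G0] eq(1,2) G
      by simp
  next
    case (neq t1 t2)
    then show ?thesis
      using that[of G0] step_avoiding.neq[OF neq(3), of P "vars_goal D" G0] neq(1,2) G by simp
  next
    case (res C C' \<theta>)
    have "subst_goal \<theta> D = D"
      using subst_vars_mgu_atoms[OF res(6)] assms(3) res(5) G
      by (intro subst_goal_ident_disjoint) (auto simp: vars_clause_def)
    moreover have "step_avoiding P (vars_goal D) G (subst_goal \<theta> (bd_cl C' @ G0))"
      unfolding G using res(2-6) by (intro step_avoiding.res) auto
    ultimately show ?thesis
      using that res(1) by simp
  qed
qed

section \<open>Counting successful derivations\<close>

definition lambda_goal :: "('f, 'p, 'v) goal \<Rightarrow> nat" where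
  "lambda_goal G = (if G \<noteq> [] \<and> nonbasic (hd G) then 1 else 0)"

inductive succeeds_with :: "('f, 'p, 'v) program \<Rightarrow> ('f, 'p, 'v) goal \<Rightarrow> nat \<Rightarrow> nat \<Rightarrow> bool"
  for P where
  Nil: "succeeds_with P [] 0 0"
| step: "step P G G' \<Longrightarrow> succeeds_with P G' n l \<Longrightarrow> succeeds_with P G (Suc n) (l + lambda_goal G)"

lemma lambda_goal_subst_goal [simp]: "lambda_goal (subst_goal \<sigma> G) = lambda_goal G"
  by (cases G) (auto simp: lambda_goal_def)

lemma lambda_goal_append: "G \<noteq> [] \<Longrightarrow> lambda_goal (G @ H) = lambda_goal G"
  by (cases G) (auto simp: lambda_goal_def)

lemma lambda_d_Cons: "lambda_d (G # ds) = lambda_goal G + lambda_d ds"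
  by (simp add: lambda_d_def lambda_goal_def)

lemma step_Nil [simp]: "\<not> step P [] G'"
  by (auto elim: step.cases)

lemma succeeds_with_renaming:
  "succeeds_with P G n l \<Longrightarrow> involution \<pi> \<Longrightarrow> succeeds_with P (subst_goal (renaming \<pi>) G) n l"
proof (induction rule: succeeds_with.induct)
  case (step G G' n l)
  then show ?case
    using succeeds_with.step[OF step_renaming[OF step(1,4)]] by simp
qed (simp add: succeeds_with.Nil)

lemma steps_iff_succeeds_with: "steps P G [] \<longleftrightarrow> (\<exists>n l. succeeds_with P G n l)"
proof
  show "steps P G [] \<Longrightarrow> \<exists>n l. succeeds_with P G n l"
    by (induction rule: converse_rtranclp_induct) (auto intro: succeeds_with.intros)
  show "\<exists>n l. succeeds_with P G n l \<Longrightarrow> steps P G []"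
    by (auto elim: succeeds_with.induct intro: converse_rtranclp_into_rtranclp)
qed

lemma successful_derivation_Cons:
  assumes "step P G (hd ds)" and "successful_derivation P (hd ds) ds"
  shows "successful_derivation P G (G # ds)"
  using assms
  by (auto simp: successful_derivation_def derivation_def nth_Cons hd_conv_nth split: nat.split)

lemma successful_derivation_ConsD:
  assumes "successful_derivation P G (G # ds)" and "ds \<noteq> []"
  shows "step P G (hd ds)" and "successful_derivation P (hd ds) ds"
  using assms by (auto simp: successful_derivation_def derivation_def hd_conv_nth)

lemma succeeds_with_iff_successful_derivation:
  "succeeds_with P G n l \<longleftrightarrow>
    (\<exists>ds. successful_derivation P G ds \<and> deriv_length ds = n \<and> lambda_d ds = l)"
proof
  show "succeeds_with P G n l \<Longrightarrow>
      \<exists>ds. successful_derivation P G ds \<and> deriv_length ds = n \<and> lambda_d ds = l"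
  proof (induction rule: succeeds_with.induct)
    case Nil
    show ?case
      by (intro exI[of _ "[[]]"])
        (simp add: successful_derivation_def derivation_def deriv_length_def lambda_d_def)
  next
    case (step G G' n l)
    then obtain ds where ds: "successful_derivation P G' ds" "deriv_length ds = n" "lambda_d ds = l"
      by blast
    then have "ds \<noteq> []" "hd ds = G'"
      by (auto simp: successful_derivation_def derivation_def)
    then show ?case
      using successful_derivation_Cons[of P G ds] step(1) ds
      by (intro exI[of _ "G # ds"]) (auto simp: deriv_length_def lambda_d_Cons)
  qed
  show "\<exists>ds. successful_derivation P G ds \<and> deriv_length ds = n \<and> lambda_d ds = l \<Longrightarrow>
      succeeds_with P G n l"
  proof (elim exE conjE)
    fix ds
    show "successful_derivation P G ds \<Longrightarrow> deriv_length ds = n \<Longrightarrow> lambda_d ds = l \<Longrightarrow>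
        succeeds_with P G n l"
    proof (induction ds arbitrary: G n l)
      case Nil
      then show ?case
        by (simp add: successful_derivation_def derivation_def)
    next
      case (Cons G0 ds)
      then have G0: "G0 = G"
        by (simp add: successful_derivation_def)
      show ?case
      proof (cases "ds = []")
        case True
        then show ?thesis
          using Cons.prems G0 by (simp add: successful_derivation_def deriv_length_def lambda_d_def
              succeeds_with.Nil)
      next
        case False
        note ds = successful_derivation_ConsD[OF Cons.prems(1)[unfolded G0] False]
        have "succeeds_with P (hd ds) (deriv_length ds) (lambda_d ds)"
          using Cons.IH[OF ds(2)] by simp
        from succeeds_with.step[OF ds(1) this] show ?thesis
          using Cons.prems(2,3) False G0 by (simp add: deriv_length_def lambda_d_Cons add.commute)
      qed
    qed
  qed
qed

lemma mu_eq_Inf_succeeds_with: "mu P G = Inf {enat l | l. \<exists>n. succeeds_with P G n l}"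
  unfolding mu_def succeeds_with_iff_successful_derivation by (rule arg_cong[where f = Inf]) auto

lemma nu_eq_Inf_succeeds_with: "nu P G = Inf {enat n | n. \<exists>l. succeeds_with P G n l}"
  unfolding nu_def succeeds_with_iff_successful_derivation by (rule arg_cong[where f = Inf]) auto

section \<open>Disequations commute with a variable-disjoint goal\<close>

definition diseqs_hold :: "('f, 'p, 'v) goal \<Rightarrow> bool" where
  "diseqs_hold D \<longleftrightarrow> (\<forall>s t. Neq s t \<in> set D \<longrightarrow> \<not> unifiable [(s, t)])"

lemma succeeds_with_Neq_Cons_iff:
  "succeeds_with P (Neq s t # G) n l \<longleftrightarrow>
    (\<exists>n'. n = Suc n' \<and> \<not> unifiable [(s, t)] \<and> succeeds_with P G n' l)"
proof
  assume "succeeds_with P (Neq s t # G) n l"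
  then show "\<exists>n'. n = Suc n' \<and> \<not> unifiable [(s, t)] \<and> succeeds_with P G n' l"
    by cases (auto elim: step.cases simp: lambda_goal_def)
next
  assume "\<exists>n'. n = Suc n' \<and> \<not> unifiable [(s, t)] \<and> succeeds_with P G n' l"
  then show "succeeds_with P (Neq s t # G) n l"
    using succeeds_with.step[OF step.neq] by (fastforce simp: lambda_goal_def)
qed

lemma succeeds_with_diseqs_append_iff:
  assumes "\<forall>A\<in>set D. is_diseq A"
  shows "succeeds_with P (D @ G) n l \<longleftrightarrow>
    diseqs_hold D \<and> length D \<le> n \<and> succeeds_with P G (n - length D) l"
  using assms
proof (induction D arbitrary: n)
  case Nil
  then show ?case
    by (simp add: diseqs_hold_def)
next
  case (Cons A D)
  then obtain s t where "A = Neq s t"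
    by (auto simp: is_diseq_def)
  then show ?case
    using Cons by (cases n) (auto simp: succeeds_with_Neq_Cons_iff diseqs_hold_def)
qed

lemma succeeds_with_append_diseqsD:
  assumes "\<forall>A\<in>set D. is_diseq A"
  shows "succeeds_with P (G @ D) n l \<Longrightarrow> vars_goal G \<inter> vars_goal D = {} \<Longrightarrow>
    diseqs_hold D \<and> length D \<le> n \<and> succeeds_with P G (n - length D) l"
proof (induction n arbitrary: G l)
  case 0
  then have "G = [] \<and> D = [] \<and> l = 0"
    by (auto elim: succeeds_with.cases)
  then show ?case
    by (simp add: diseqs_hold_def succeeds_with.Nil)
next
  case (Suc n)
  show ?case
  proof (cases "G = []")
    case True
    then show ?thesis
      using Suc.prems(1) succeeds_with_diseqs_append_iff[OF assms, of P "[]"] by simp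
  next
    case False
    obtain Y l' where "step P (G @ D) Y" and Y: "succeeds_with P Y n l'"
      and l: "l = l' + lambda_goal (G @ D)"
      using Suc.prems(1) by cases auto
    then obtain G' where G': "Y = G' @ D" "step_avoiding P (vars_goal D) G G'"
      using step_appendE False Suc.prems(2) by metis
    then have "vars_goal G' \<inter> vars_goal D = {}"
      using vars_step_avoiding[OF G'(2)] Suc.prems(2) by blast
    then have IH: "diseqs_hold D" "length D \<le> n" "succeeds_with P G' (n - length D) l'"
      using Suc.IH Y G'(1) by auto
    have "succeeds_with P G (Suc (n - length D)) (l' + lambda_goal G)"
      using succeeds_with.step[OF step_avoiding_imp_step[OF G'(2)] IH(3)] .
    then show ?thesis
      using IH l lambda_goal_append[OF False] by (simp add: Suc_diff_le)
  qed
qed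

lemma succeeds_with_append_diseqsI:
  fixes G :: "('f, 'p, 'v::infinite) goal"
  assumes "\<forall>A\<in>set D. is_diseq A" and "diseqs_hold D"
  shows "succeeds_with P G n l \<Longrightarrow> vars_goal G \<inter> vars_goal D = {} \<Longrightarrow>
    succeeds_with P (G @ D) (n + length D) l"
proof (induction n arbitrary: G l)
  case 0
  then have "G = [] \<and> l = 0"
    by (auto elim: succeeds_with.cases)
  then show ?case
    using succeeds_with_diseqs_append_iff[OF assms(1), of P "[]"] assms(2)
    by (simp add: succeeds_with.Nil)
next
  case (Suc n)
  obtain G1 l1 where G1: "step P G G1" "succeeds_with P G1 n l1" and l: "l = l1 + lambda_goal G"
    using Suc.prems(1) by cases auto
  obtain \<pi> where \<pi>: "involution \<pi>"
    and G1': "step_avoiding P (vars_goal D) G (subst_goal (renaming \<pi>) G1)"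
    using step_imp_step_avoiding_renamed[OF G1(1) finite_vars_goal] by blast
  have "vars_goal (subst_goal (renaming \<pi>) G1) \<inter> vars_goal D = {}"
    using vars_step_avoiding[OF G1'] Suc.prems(2) by blast
  then have "succeeds_with P (subst_goal (renaming \<pi>) G1 @ D) (n + length D) l1"
    using Suc.IH succeeds_with_renaming[OF G1(2) \<pi>] by blast
  moreover have "G \<noteq> []"
    using G1(1) by (cases G) auto
  ultimately show ?case
    using succeeds_with.step[OF step_avoiding_append[OF G1' Suc.prems(2)]] l
    by (simp add: lambda_goal_append)
qed

lemma succeeds_with_append_diseqs_iff:
  fixes G :: "('f, 'p, 'v::infinite) goal"
  assumes "\<forall>A\<in>set D. is_diseq A" and "vars_goal G \<inter> vars_goal D = {}"
  shows "succeeds_with P (G @ D) n l \<longleftrightarrow>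
    diseqs_hold D \<and> length D \<le> n \<and> succeeds_with P G (n - length D) l"
  using succeeds_with_append_diseqsD[OF assms(1) _ assms(2)]
    succeeds_with_append_diseqsI[OF assms(1) _ _ assms(2), of P "n - length D" l]
  by auto

lemma succeeds_with_append_diseqs_commute:
  fixes G :: "('f, 'p, 'v::infinite) goal"
  assumes "\<forall>A\<in>set D. is_diseq A" and "vars_goal G \<inter> vars_goal D = {}"
  shows "succeeds_with P (G @ D) = succeeds_with P (D @ G)"
  using succeeds_with_append_diseqs_iff[OF assms] succeeds_with_diseqs_append_iff[OF assms(1)]
  by (intro ext) simp

theorem lemma9:
  fixes P :: "('f, 'p, 'v::infinite) program"
    and M :: "'p modes"
    and Diseqs G :: "('f, 'p, 'v) goal"
  assumes "mode_for M P"
    and "safe_prog M P"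
    and "prog_satisfies P M"
    and "\<forall>A\<in>set Diseqs. is_diseq A"
    and "vars_goal Diseqs \<inter> vars_goal G = {}"
  shows "(steps P (G @ Diseqs) [] \<longleftrightarrow> steps P (Diseqs @ G) [])
    \<and> mu P (G @ Diseqs) = mu P (Diseqs @ G)
    \<and> nu P (G @ Diseqs) = nu P (Diseqs @ G)"
proof -
  have "succeeds_with P (G @ Diseqs) = succeeds_with P (Diseqs @ G)"
    using succeeds_with_append_diseqs_commute[OF assms(4)] assms(5) by blast
  then show ?thesis
    by (simp add: steps_iff_succeeds_with mu_eq_Inf_succeeds_with nu_eq_Inf_succeeds_with)
qed

end
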